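(* Up to equivalence, the first order Reed--Muller code $RM(1,5)$ is the unique binary $[32,6]$ linear code $B$ such that (i) $B$ is doubly even, (ii) $B$ contains the all-ones vector, and (iii) $B^\perp$ has minimum weight at least $4$.
   Context: A binary code is doubly even if all codeword weights are divisible by $4$. Two binary codes are equivalent if one is obtained from the other by a coordinate permutation. $RM(1,5)$ is the binary $[32,6]$ code generated by the all-ones vector and the five vectors of length $32$ given by the coordinate functions of $\mathbb{F}_2^5$; equivalently it has generator matrix with rows $1^{32}$, $1^{16}0^{16}$, $(1^80^8)^2$, $(1^40^4)^4$, $(1^20^2)^8$, $(10)^{16}$. Its weight enumerator is $1+62y^{16}+y^{32}$. *)

theory Defs
  imports Main "HOL-Combinatorics.Permutations"
begin

text \<open>Binary vectors of length n: functions nat => bool supported on the coordinates {..<n}.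
  Addition over GF(2) is pointwise exclusive or.\<close>

definition words :: "nat \<Rightarrow> (nat \<Rightarrow> bool) set" where
  "words n = {v. \<forall>i. n \<le> i \<longrightarrow> \<not> v i}"

definition zero_vec :: "nat \<Rightarrow> bool" where
  "zero_vec = (\<lambda>i. False)"

definition ones_vec :: "nat \<Rightarrow> nat \<Rightarrow> bool" where
  "ones_vec n = (\<lambda>i. i < n)"

definition vadd :: "(nat \<Rightarrow> bool) \<Rightarrow> (nat \<Rightarrow> bool) \<Rightarrow> nat \<Rightarrow> bool" where
  "vadd u v = (\<lambda>i. u i \<noteq> v i)"

definition weight :: "nat \<Rightarrow> (nat \<Rightarrow> bool) \<Rightarrow> nat" where
  "weight n v = card {i. i < n \<and> v i}"

definition inner_even :: "nat \<Rightarrow> (nat \<Rightarrow> bool) \<Rightarrow> (nat \<Rightarrow> bool) \<Rightarrow> bool" where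
  "inner_even n u v \<longleftrightarrow> even (card {i. i < n \<and> u i \<and> v i})"

definition linear_code :: "nat \<Rightarrow> (nat \<Rightarrow> bool) set \<Rightarrow> bool" where
  "linear_code n C \<longleftrightarrow> C \<subseteq> words n \<and> zero_vec \<in> C \<and> (\<forall>u\<in>C. \<forall>v\<in>C. vadd u v \<in> C)"

text \<open>A binary [n,k] linear code: a subspace of dimension k, i.e. with 2^k elements.\<close>
definition binary_code :: "nat \<Rightarrow> nat \<Rightarrow> (nat \<Rightarrow> bool) set \<Rightarrow> bool" where
  "binary_code n k C \<longleftrightarrow> linear_code n C \<and> card C = 2 ^ k"

definition dual_code :: "nat \<Rightarrow> (nat \<Rightarrow> bool) set \<Rightarrow> (nat \<Rightarrow> bool) set" where
  "dual_code n C = {v \<in> words n. \<forall>c\<in>C. inner_even n v c}"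

definition doubly_even :: "nat \<Rightarrow> (nat \<Rightarrow> bool) set \<Rightarrow> bool" where
  "doubly_even n C \<longleftrightarrow> (\<forall>c\<in>C. 4 dvd weight n c)"

definition min_weight_ge :: "nat \<Rightarrow> (nat \<Rightarrow> bool) set \<Rightarrow> nat \<Rightarrow> bool" where
  "min_weight_ge n C d \<longleftrightarrow> (\<forall>v\<in>C. v \<noteq> zero_vec \<longrightarrow> d \<le> weight n v)"

definition equiv_codes :: "nat \<Rightarrow> (nat \<Rightarrow> bool) set \<Rightarrow> (nat \<Rightarrow> bool) set \<Rightarrow> bool" where
  "equiv_codes n C D \<longleftrightarrow> (\<exists>\<sigma>. \<sigma> permutes {..<n} \<and> D = (\<lambda>v. v \<circ> \<sigma>) ` C)"

definition gf2_span :: "(nat \<Rightarrow> bool) set \<Rightarrow> (nat \<Rightarrow> bool) set" where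
  "gf2_span G = {v. \<exists>S\<subseteq>G. v = (\<lambda>i. odd (card {g\<in>S. g i}))}"

text \<open>Generator rows of RM(1,5): 1^32, and for m = 4,3,2,1,0 the row (1^(2^m) 0^(2^m))^(32/2^(m+1)),
  i.e. coordinate i (0-based) is 1 iff (i div 2^m) is even.\<close>
definition RM15_rows :: "(nat \<Rightarrow> bool) set" where
  "RM15_rows = insert (ones_vec 32) ((\<lambda>m. (\<lambda>i. i < 32 \<and> even (i div 2 ^ m))) ` {0..4})"

definition RM15 :: "(nat \<Rightarrow> bool) set" where
  "RM15 = gf2_span RM15_rows"

end

theory Submission
  imports Defs
begin

text \<open>
  We prove this for RM(1,r) of length 2^r for all r.  Coordinates are the integers i < 2^r and
  the generators are the all-ones word and the r coordinate rows ("bit m of i is 0").  The key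
  observation is that the coordinate rows give the 2^r coordinates pairwise distinct labels in
  {0,1}^r, i.e. every label occurs exactly once.  This yields independence of the generators,
  the weights needed for double evenness (r \<ge> 3) and the dual distance 4.  Conversely, let B be
  an [2^r, r+1] code containing the all-ones word whose dual has minimum weight > 2.  Extend
  the all-ones word to a basis; the dual condition forces the other r basis words to give the
  coordinates pairwise distinct labels as well, so reordering the coordinates to match labels
  maps RM(1,r) onto B.
\<close>

definition vsum :: "(nat \<Rightarrow> bool) set \<Rightarrow> nat \<Rightarrow> bool" where
  "vsum S = (\<lambda>i. odd (card {g \<in> S. g i}))"

lemma gf2_span_eq: "gf2_span G = vsum ` Pow G"
  by (auto simp: gf2_span_def vsum_def)

lemma vsum_empty [simp]: "vsum {} = zero_vec"
  by (simp add: vsum_def zero_vec_def)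

lemma vsum_singleton [simp]: "vsum {g} = g"
proof
  fix i
  have "{h \<in> {g}. h i} = (if g i then {g} else {})" by auto
  then show "vsum {g} i = g i" by (simp add: vsum_def)
qed

lemma vsum_insert:
  assumes "finite S" "g \<notin> S"
  shows "vsum (insert g S) = vadd g (vsum S)"
proof
  fix i
  have "{h \<in> insert g S. h i} = (if g i then insert g {h \<in> S. h i} else {h \<in> S. h i})"
    by auto
  then show "vsum (insert g S) i = vadd g (vsum S) i"
    using assms by (simp add: vsum_def vadd_def)
qed

lemma vsum_at_single: "{g \<in> U. g i} = {h} \<Longrightarrow> vsum U i"
  by (simp add: vsum_def)

lemma vadd_self: "vadd u u = zero_vec"
  by (simp add: vadd_def zero_vec_def)

text \<open>Counting identity behind all parity arguments:
  |A \<triangle> B| + 2|A \<inter> B| = |A| + |B|.\<close>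
lemma card_sym_diff:
  assumes "finite A" "finite B"
  shows "card ((A - B) \<union> (B - A)) + 2 * card (A \<inter> B) = card A + card B"
proof -
  have "card (A \<union> B) = card (((A - B) \<union> (B - A)) \<union> (A \<inter> B))"
    by (rule arg_cong[where f = card]) blast
  also have "\<dots> = card ((A - B) \<union> (B - A)) + card (A \<inter> B)"
    by (rule card_Un_disjoint) (use assms in auto)
  finally show ?thesis using card_Un_Int[OF assms] by simp
qed

lemma parity_of_sum_identity: "(a::nat) + 2 * c = b + d \<Longrightarrow> odd a \<longleftrightarrow> (odd b \<noteq> odd d)"
  by presburger

lemma vsum_sym_diff:
  assumes "finite S" "finite T"
  shows "vsum ((S - T) \<union> (T - S)) = vadd (vsum S) (vsum T)"
proof
  fix i
  let ?A = "{g \<in> S. g i}" and ?B = "{g \<in> T. g i}"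
  have "{g \<in> (S - T) \<union> (T - S). g i} = (?A - ?B) \<union> (?B - ?A)" by auto
  moreover have "card ((?A - ?B) \<union> (?B - ?A)) + 2 * card (?A \<inter> ?B) = card ?A + card ?B"
    by (rule card_sym_diff) (use assms in auto)
  ultimately have "card {g \<in> (S - T) \<union> (T - S). g i} + 2 * card (?A \<inter> ?B) = card ?A + card ?B"
    by simp
  then show "vsum ((S - T) \<union> (T - S)) i = vadd (vsum S) (vsum T) i"
    unfolding vsum_def vadd_def by (rule parity_of_sum_identity)
qed

lemma vsum_words:
  assumes "T \<subseteq> words n"
  shows "vsum T \<in> words n"
proof -
  have "\<not> vsum T i" if "n \<le> i" for i
  proof -
    have "{g \<in> T. g i} = {}" using assms that by (auto simp: words_def)
    then show ?thesis by (metis card.empty even_zero vsum_def)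
  qed
  then show ?thesis by (simp add: words_def)
qed

lemma gf2_span_linear_code:
  assumes "finite G" "G \<subseteq> words n"
  shows "linear_code n (gf2_span G)"
  unfolding linear_code_def gf2_span_eq
proof (intro conjI ballI)
  show "vsum ` Pow G \<subseteq> words n" using vsum_words assms(2) by blast
  show "zero_vec \<in> vsum ` Pow G" by (metis Pow_bottom image_eqI vsum_empty)
  fix u v assume "u \<in> vsum ` Pow G" "v \<in> vsum ` Pow G"
  then obtain S T where ST: "S \<subseteq> G" "T \<subseteq> G" "u = vsum S" "v = vsum T" by auto
  then have "vadd u v = vsum ((S - T) \<union> (T - S))"
    using vsum_sym_diff assms(1) finite_subset by metis
  moreover have "(S - T) \<union> (T - S) \<in> Pow G" using ST by auto
  ultimately show "vadd u v \<in> vsum ` Pow G" by blast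
qed

lemma vsum_in_code:
  assumes "linear_code n C" "finite T" "T \<subseteq> C"
  shows "vsum T \<in> C"
  using assms(2,3)
proof (induction T rule: finite_induct)
  case (insert g T)
  then show ?case using assms(1) by (simp add: vsum_insert linear_code_def)
qed (use assms(1) in \<open>simp add: linear_code_def\<close>)

lemma gf2_span_subset_code:
  assumes "linear_code n C" "finite G" "G \<subseteq> C"
  shows "gf2_span G \<subseteq> C"
proof
  fix v assume "v \<in> gf2_span G"
  then obtain T where T: "T \<subseteq> G" "v = vsum T" by (auto simp: gf2_span_eq)
  then have "finite T" using assms(2) finite_subset by blast
  then show "v \<in> C" using vsum_in_code[OF assms(1)] T assms(3) by blast
qed

lemma gf2_span_generators: "G \<subseteq> gf2_span G"
proof
  fix g assume "g \<in> G"
  then have "vsum {g} \<in> vsum ` Pow G" by (intro imageI) simp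
  then show "g \<in> gf2_span G" by (simp add: gf2_span_eq)
qed

definition independent :: "(nat \<Rightarrow> bool) set \<Rightarrow> bool" where
  "independent S \<longleftrightarrow> (\<forall>U \<subseteq> S. vsum U = zero_vec \<longrightarrow> U = {})"

lemma independent_vsum_inj:
  assumes "finite S" "independent S"
  shows "inj_on vsum (Pow S)"
proof (rule inj_onI)
  fix T U assume TU: "T \<in> Pow S" "U \<in> Pow S" "vsum T = vsum U"
  have "finite T" "finite U" using TU(1,2) assms(1) finite_subset by auto
  then have "vsum ((T - U) \<union> (U - T)) = zero_vec"
    using TU(3) by (simp add: vsum_sym_diff vadd_self)
  moreover have "(T - U) \<union> (U - T) \<subseteq> S" using TU(1,2) by auto
  ultimately have "(T - U) \<union> (U - T) = {}" using assms(2) unfolding independent_def by blast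
  then show "T = U" by blast
qed

lemma card_gf2_span_independent:
  assumes "finite S" "independent S"
  shows "card (gf2_span S) = 2 ^ card S"
  using card_image[OF independent_vsum_inj[OF assms]] assms(1)
  by (simp add: gf2_span_eq card_Pow)

lemma independent_insert:
  assumes "finite S" "independent S" "v \<notin> gf2_span S"
  shows "independent (insert v S)"
  unfolding independent_def
proof (intro allI impI)
  fix U assume U: "U \<subseteq> insert v S" "vsum U = zero_vec"
  show "U = {}"
  proof (cases "v \<in> U")
    case True
    have "finite (U - {v})" using U(1) assms(1) finite_subset by auto
    then have "vsum U = vadd v (vsum (U - {v}))"
      using vsum_insert[of "U - {v}" v] True by (simp add: insert_absorb)
    then have "v = vsum (U - {v})" using U(2) by (auto simp: vadd_def zero_vec_def fun_eq_iff)
    moreover have "U - {v} \<in> Pow S" using U(1) by auto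
    ultimately have "v \<in> gf2_span S" by (auto simp: gf2_span_eq)
    then show ?thesis using assms(3) by contradiction
  next
    case False
    then show ?thesis using U assms(2) by (auto simp: independent_def)
  qed
qed

text \<open>Greedy extension: a finite linear code with at least 2^(k+1) words contains k+1
  independent words, one of which is any prescribed nonzero word.\<close>
lemma independent_subset_containing:
  assumes C: "linear_code n C" "finite C" and x0: "x0 \<in> C" "x0 \<noteq> zero_vec"
  shows "2 ^ Suc k \<le> card C \<Longrightarrow> \<exists>S \<subseteq> C. x0 \<in> S \<and> card S = Suc k \<and> independent S"
proof (induction k)
  case 0
  have "independent {x0}"
    unfolding independent_def
  proof (intro allI impI)
    fix U assume "U \<subseteq> {x0}" "vsum U = zero_vec"
    then show "U = {}" using x0(2) unfolding subset_singleton_iff by auto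
  qed
  then show ?case using x0(1) by (intro exI[of _ "{x0}"]) simp
next
  case (Suc k)
  have "(2::nat) ^ Suc k \<le> 2 ^ Suc (Suc k)" by simp
  then have "2 ^ Suc k \<le> card C" using Suc.prems by (rule le_trans)
  then obtain S where S: "S \<subseteq> C" "x0 \<in> S" "card S = Suc k" "independent S"
    using Suc.IH by blast
  have fS: "finite S" by (rule card_ge_0_finite) (simp add: S(3))
  have "card (gf2_span S) = 2 ^ Suc k" using card_gf2_span_independent[OF fS S(4)] S(3) by simp
  also have "\<dots> < 2 ^ Suc (Suc k)" by simp
  finally have "card (gf2_span S) < card C" using Suc.prems by linarith
  moreover have "gf2_span S \<subseteq> C" using gf2_span_subset_code[OF C(1) fS S(1)] .
  ultimately have "gf2_span S \<noteq> C" by blast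
  then obtain v where v: "v \<in> C" "v \<notin> gf2_span S"
    using \<open>gf2_span S \<subseteq> C\<close> by (meson subsetI subset_antisym)
  then have "v \<notin> S" using gf2_span_generators[of S] by blast
  then have "card (insert v S) = Suc (Suc k)" using fS S(3) by simp
  moreover have "independent (insert v S)" by (rule independent_insert[OF fS S(4) v(2)])
  moreover have "insert v S \<subseteq> C" "x0 \<in> insert v S" using S(1,2) v(1) by auto
  ultimately show ?case by blast
qed

lemma basis_containing:
  assumes "binary_code n (Suc k) C" "x0 \<in> C" "x0 \<noteq> zero_vec"
  shows "\<exists>S \<subseteq> C. x0 \<in> S \<and> card S = Suc k \<and> independent S \<and> gf2_span S = C"
proof -
  have lin: "linear_code n C" and cC: "card C = 2 ^ Suc k"
    using assms(1) by (auto simp: binary_code_def)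
  then have fC: "finite C" by (intro card_ge_0_finite) simp
  obtain S where S: "S \<subseteq> C" "x0 \<in> S" "card S = Suc k" "independent S"
    using independent_subset_containing[OF lin fC assms(2,3)] cC by auto
  have fS: "finite S" by (rule card_ge_0_finite) (simp add: S(3))
  have "gf2_span S = C"
    using card_subset_eq[OF fC gf2_span_subset_code[OF lin fS S(1)]]
      card_gf2_span_independent[OF fS S(4)] S(3) cC by simp
  then show ?thesis using S by blast
qed

lemma card_vadd:
  "card {i. i < n \<and> vadd u v i \<and> X i} + 2 * card {i. i < n \<and> u i \<and> v i \<and> X i}
   = card {i. i < n \<and> u i \<and> X i} + card {i. i < n \<and> v i \<and> X i}"
proof -
  let ?A = "{i. i < n \<and> u i \<and> X i}" and ?B = "{i. i < n \<and> v i \<and> X i}"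
  have sum: "{i. i < n \<and> vadd u v i \<and> X i} = (?A - ?B) \<union> (?B - ?A)" by (auto simp: vadd_def)
  have prod: "{i. i < n \<and> u i \<and> v i \<and> X i} = ?A \<inter> ?B" by auto
  show ?thesis unfolding sum prod by (rule card_sym_diff) auto
qed

lemma inner_even_vsum:
  assumes "finite T" "\<forall>g\<in>T. inner_even n g h"
  shows "inner_even n (vsum T) h"
  using assms
proof (induction T rule: finite_induct)
  case empty
  then show ?case by (simp add: inner_even_def zero_vec_def)
next
  case (insert g T)
  have "inner_even n g h" "inner_even n (vsum T) h" using insert by simp_all
  then show ?case
    using parity_of_sum_identity[OF card_vadd[of n g "vsum T" h]]
    by (simp add: inner_even_def vsum_insert[OF insert(1,2)])
qed

lemma dvd4_of_sum_identity:
  "(a::nat) + 2 * c = b + d \<Longrightarrow> 4 dvd b \<Longrightarrow> 4 dvd d \<Longrightarrow> even c \<Longrightarrow> 4 dvd a"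
  by presburger

lemma doubly_even_gf2_span:
  assumes "finite G" "\<forall>g\<in>G. \<forall>h\<in>G. inner_even n g h" "\<forall>g\<in>G. 4 dvd weight n g"
  shows "doubly_even n (gf2_span G)"
proof -
  have "4 dvd weight n (vsum T)" if "finite T" "T \<subseteq> G" for T
    using that
  proof (induction T rule: finite_induct)
    case empty
    then show ?case by (simp add: weight_def zero_vec_def)
  next
    case (insert g T)
    have gG: "g \<in> G" and TG: "T \<subseteq> G" using insert.prems by auto
    then have "\<forall>h\<in>T. inner_even n h g" using assms(2) by blast
    then have orth: "even (card {i. i < n \<and> vsum T i \<and> g i})"
      using inner_even_vsum insert.hyps(1) by (simp add: inner_even_def)
    have "{i. i < n \<and> g i \<and> vsum T i} = {i. i < n \<and> vsum T i \<and> g i}" by blast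
    then have "weight n (vadd g (vsum T)) + 2 * card {i. i < n \<and> vsum T i \<and> g i}
        = weight n g + weight n (vsum T)"
      using card_vadd[of n g "vsum T" "\<lambda>_. True"] by (simp add: weight_def)
    then have "4 dvd weight n (vadd g (vsum T))"
      by (rule dvd4_of_sum_identity) (use assms(3) gG insert.IH TG orth in auto)
    then show ?case by (simp add: vsum_insert[OF insert(1,2)])
  qed
  then show ?thesis
    using assms(1) finite_subset unfolding doubly_even_def gf2_span_eq by blast
qed

text \<open>If the dual code has no words of weight 1 or 2, the code separates coordinates:
  otherwise the word supported on two coordinates it cannot distinguish would be dual.\<close>
lemma dual_separates_coordinates:
  assumes "min_weight_ge n (dual_code n C) d" "2 < d" "i < n" "j < n" "i \<noteq> j"
  shows "\<exists>c\<in>C. c i \<noteq> c j"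
proof (rule ccontr)
  assume "\<not> ?thesis"
  then have eq: "c i = c j" if "c \<in> C" for c using that by blast
  define e where "e = (\<lambda>k::nat. k = i \<or> k = j)"
  have support: "{k. k < n \<and> e k} = {i, j}" using assms(3,4) by (auto simp: e_def)
  have "inner_even n e c" if "c \<in> C" for c
  proof (cases "c i")
    case True
    then have "{k. k < n \<and> e k \<and> c k} = {i, j}" using eq[OF that] support by auto
    then show ?thesis using assms(5) by (simp add: inner_even_def)
  next
    case False
    then have "{k. k < n \<and> e k \<and> c k} = {}" using eq[OF that] by (auto simp: e_def)
    then show ?thesis unfolding inner_even_def by (simp only: card.empty) simp
  qed
  moreover have "e \<in> words n" using assms(3,4) by (auto simp: e_def words_def)
  ultimately have "e \<in> dual_code n C" by (simp add: dual_code_def)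
  moreover have "e \<noteq> zero_vec"
  proof
    assume "e = zero_vec"
    then have "e i = zero_vec i" by simp
    then show False by (simp add: e_def zero_vec_def)
  qed
  ultimately have "d \<le> weight n e" using assms(1) by (simp add: min_weight_ge_def)
  moreover have "weight n e = 2" using support assms(5) by (simp add: weight_def)
  ultimately show False using assms(2) by simp
qed

lemma vsum_comp:
  assumes "surj \<tau>"
  shows "vsum T \<circ> \<tau> = vsum ((\<lambda>v. v \<circ> \<tau>) ` T)"
proof
  fix i
  have inj: "inj (\<lambda>v::nat \<Rightarrow> bool. v \<circ> \<tau>)"
  proof (rule injI)
    fix v w :: "nat \<Rightarrow> bool" assume "v \<circ> \<tau> = w \<circ> \<tau>"
    then have vw: "v (\<tau> y) = w (\<tau> y)" for y by (metis comp_apply)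
    show "v = w"
    proof
      fix x
      obtain y where "x = \<tau> y" using assms by (metis surjD)
      then show "v x = w x" using vw by simp
    qed
  qed
  have "{h \<in> (\<lambda>v. v \<circ> \<tau>) ` T. h i} = (\<lambda>v. v \<circ> \<tau>) ` {g \<in> T. g (\<tau> i)}" by auto
  moreover have "card ((\<lambda>v. v \<circ> \<tau>) ` {g \<in> T. g (\<tau> i)}) = card {g \<in> T. g (\<tau> i)}"
    using inj by (simp add: card_image inj_on_subset)
  ultimately show "(vsum T \<circ> \<tau>) i = vsum ((\<lambda>v. v \<circ> \<tau>) ` T) i" by (simp add: vsum_def)
qed

lemma gf2_span_comp:
  assumes "surj \<tau>"
  shows "(\<lambda>v. v \<circ> \<tau>) ` gf2_span G = gf2_span ((\<lambda>v. v \<circ> \<tau>) ` G)"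
proof -
  have "(\<lambda>v. v \<circ> \<tau>) ` gf2_span G = (\<lambda>T. vsum ((\<lambda>v. v \<circ> \<tau>) ` T)) ` Pow G"
    by (simp add: gf2_span_eq image_image vsum_comp[OF assms])
  also have "\<dots> = vsum ` (image (\<lambda>v. v \<circ> \<tau>) ` Pow G)"
    by (simp add: image_image)
  also have "\<dots> = vsum ` Pow ((\<lambda>v. v \<circ> \<tau>) ` G)"
    by (simp add: image_Pow_surj)
  finally show ?thesis by (simp add: gf2_span_eq)
qed

text \<open>The coordinate rows of RM(1,r): coordinates are the integers i < 2^r, and row m is 1
  exactly where bit m of i is 0 (the convention of the generator matrix
  of RM(1,5) in the statement).\<close>
definition coord_row :: "nat \<Rightarrow> nat \<Rightarrow> nat \<Rightarrow> bool" where
  "coord_row r m = (\<lambda>i. i < 2 ^ r \<and> even (i div 2 ^ m))"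

definition RM1_rows :: "nat \<Rightarrow> (nat \<Rightarrow> bool) set" where
  "RM1_rows r = insert (ones_vec (2 ^ r)) (coord_row r ` {..<r})"

definition RM1 :: "nat \<Rightarrow> (nat \<Rightarrow> bool) set" where
  "RM1 r = gf2_span (RM1_rows r)"

text \<open>The column (label) of coordinate i with respect to a family f of r rows:
  the vector (f 0 i, ..., f (r-1) i), made extensional so that equal columns are equal functions.\<close>
definition column :: "nat \<Rightarrow> (nat \<Rightarrow> nat \<Rightarrow> bool) \<Rightarrow> nat \<Rightarrow> nat \<Rightarrow> bool" where
  "column r f i = restrict (\<lambda>m. f m i) {..<r}"

definition labels :: "nat \<Rightarrow> (nat \<Rightarrow> bool) set" where
  "labels r = PiE {..<r} (\<lambda>_. UNIV)"

lemma card_labels: "card (labels r) = 2 ^ r"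
  by (simp add: labels_def card_PiE)

lemma finite_labels: "finite (labels r)"
  by (simp add: labels_def finite_PiE)

lemma column_in_labels: "column r f i \<in> labels r"
  by (simp add: column_def labels_def)

lemma column_eq_iff: "column r f i = column r g j \<longleftrightarrow> (\<forall>m<r. f m i = g m j)"
  by (auto simp: column_def restrict_def fun_eq_iff)

lemma bij_betw_column:
  assumes "inj_on (column r f) {..<2 ^ r}"
  shows "bij_betw (column r f) {..<2 ^ r} (labels r)"
proof -
  have "column r f ` {..<2 ^ r} = labels r"
    by (rule card_subset_eq) (use finite_labels column_in_labels card_image[OF assms] card_labels in auto)
  then show ?thesis using assms by (simp add: bij_betw_def)
qed

lemma low_bits_inj:
  fixes i j :: nat
  assumes "i < 2 ^ r" "j < 2 ^ r" "\<forall>m<r. even (i div 2 ^ m) \<longleftrightarrow> even (j div 2 ^ m)"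
  shows "i = j"
proof -
  have "even (i div 2 ^ m) \<longleftrightarrow> even (j div 2 ^ m)" for m
  proof (cases "m < r")
    case False
    then have "(2::nat) ^ r \<le> 2 ^ m" by simp
    then have "i div 2 ^ m = 0" "j div 2 ^ m = 0"
      using assms(1,2) by (meson div_less order_less_le_trans)+
    then show ?thesis by simp
  qed (use assms(3) in simp)
  then show ?thesis by (simp add: bit_eq_iff bit_iff_odd)
qed

lemma coord_column_bij: "bij_betw (column r (coord_row r)) {..<2 ^ r} (labels r)"
proof (rule bij_betw_column, rule inj_onI)
  fix i j assume "i \<in> {..<2 ^ r}" "j \<in> {..<2 ^ r}"
    "column r (coord_row r) i = column r (coord_row r) j"
  then show "i = j" by (intro low_bits_inj[of i r j]) (auto simp: column_eq_iff coord_row_def)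
qed

lemma exists_point_with_coords:
  assumes "p \<in> labels r"
  shows "\<exists>i < 2 ^ r. \<forall>m<r. coord_row r m i = p m"
proof -
  have "p \<in> column r (coord_row r) ` {..<2 ^ r}"
    using assms coord_column_bij[of r] by (simp add: bij_betw_def)
  then obtain i where i: "i < 2 ^ r" "column r (coord_row r) i = p" by auto
  have "coord_row r m i = p m" if "m < r" for m
    using fun_cong[OF i(2), of m] that by (simp add: column_def)
  then show ?thesis using i(1) by blast
qed

lemma points_separated:
  assumes "i < 2 ^ r" "j < 2 ^ r" "i \<noteq> j"
  shows "\<exists>m<r. coord_row r m i \<noteq> coord_row r m j"
  using assms inj_onD[OF bij_betw_imp_inj_on[OF coord_column_bij[of r]], of i j]
  by (auto simp: column_eq_iff)

lemma card_points_with_coords: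
  assumes "K \<subseteq> {..<r}"
  shows "card {i. i < 2 ^ r \<and> (\<forall>k\<in>K. coord_row r k i)} = 2 ^ (r - card K)"
proof -
  let ?col = "column r (coord_row r)" and ?P = "\<lambda>p. \<forall>k\<in>K. p k"
  have "{i. i < 2 ^ r \<and> (\<forall>k\<in>K. coord_row r k i)} = {i \<in> {..<2 ^ r}. ?P (?col i)}"
    using assms by (auto simp: column_def)
  moreover have "inj_on ?col {i \<in> {..<2 ^ r}. ?P (?col i)}"
    by (rule inj_on_subset[OF bij_betw_imp_inj_on[OF coord_column_bij]]) auto
  ultimately have "card {i. i < 2 ^ r \<and> (\<forall>k\<in>K. coord_row r k i)}
      = card (?col ` {i \<in> {..<2 ^ r}. ?P (?col i)})"
    by (simp add: card_image)
  also have "?col ` {i \<in> {..<2 ^ r}. ?P (?col i)} = {p \<in> labels r. ?P p}"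
    using coord_column_bij[of r] by (auto simp: bij_betw_def)
  also have "{p \<in> labels r. ?P p} = PiE {..<r} (\<lambda>k. if k \<in> K then {True} else UNIV)"
  proof (intro equalityI subsetI)
    fix p assume "p \<in> {p \<in> labels r. ?P p}"
    then show "p \<in> PiE {..<r} (\<lambda>k. if k \<in> K then {True} else UNIV)"
      by (auto simp: labels_def PiE_iff)
  next
    fix p assume p: "p \<in> PiE {..<r} (\<lambda>k. if k \<in> K then {True} else UNIV)"
    then have "p k" if "k \<in> K" for k using that assms by (auto simp: PiE_iff dest!: bspec[of _ _ k])
    then show "p \<in> {p \<in> labels r. ?P p}" using p by (auto simp: labels_def PiE_iff)
  qed
  also have "card \<dots> = (\<Prod>k<r. if k \<in> K then 1 else 2)"
    by (simp add: card_PiE) (rule prod.cong, auto)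
  also have "\<dots> = 2 ^ card ({..<r} - K)"
    by (simp add: prod.If_cases Diff_eq)
  also have "card ({..<r} - K) = r - card K"
    using assms by (simp add: card_Diff_subset finite_subset)
  finally show ?thesis .
qed

lemma coord_row_weight:
  assumes "m < r"
  shows "weight (2 ^ r) (coord_row r m) = 2 ^ (r - 1)"
proof -
  have "{i. i < 2 ^ r \<and> coord_row r m i} = {i. i < 2 ^ r \<and> (\<forall>k\<in>{m}. coord_row r k i)}" by simp
  then show ?thesis using card_points_with_coords[of "{m}" r] assms by (simp add: weight_def)
qed

lemma coord_row_overlap:
  assumes "m < r" "m' < r" "m \<noteq> m'"
  shows "card {i. i < 2 ^ r \<and> coord_row r m i \<and> coord_row r m' i} = 2 ^ (r - 2)"
proof -
  have "{i. i < 2 ^ r \<and> coord_row r m i \<and> coord_row r m' i}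
      = {i. i < 2 ^ r \<and> (\<forall>k\<in>{m, m'}. coord_row r k i)}" by auto
  then show ?thesis using card_points_with_coords[of "{m, m'}" r] assms by simp
qed

lemma point_off_rows: "\<exists>z < 2 ^ r. \<forall>m<r. \<not> coord_row r m z"
  using exists_point_with_coords[of "restrict (\<lambda>_. False) {..<r}" r] by (simp add: labels_def)

lemma point_on_single_row:
  assumes "m < r"
  shows "\<exists>e < 2 ^ r. \<forall>k<r. coord_row r k e \<longleftrightarrow> k = m"
  using exists_point_with_coords[of "restrict (\<lambda>k. k = m) {..<r}" r] by (simp add: labels_def)

text \<open>The r+1 generators of RM(1,r) are independent: evaluating a vanishing sum at the
  coordinates provided above excludes each generator in turn.\<close>
lemma independent_RM1_rows: "independent (RM1_rows r)"
  unfolding independent_def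
proof (intro allI impI)
  fix U assume U: "U \<subseteq> RM1_rows r" "vsum U = zero_vec"
  have zero_at: "\<not> vsum U i" for i using U(2) by (simp add: zero_vec_def)
  obtain z where z: "z < 2 ^ r" "\<forall>m<r. \<not> coord_row r m z" using point_off_rows by blast
  have ones: "ones_vec (2 ^ r) \<notin> U"
  proof
    assume "ones_vec (2 ^ r) \<in> U"
    then have "{g \<in> U. g z} = {ones_vec (2 ^ r)}"
      using U(1) z by (auto simp: RM1_rows_def ones_vec_def)
    then show False using zero_at vsum_at_single by blast
  qed
  have "coord_row r m \<notin> U" if m_lt: "m < r" for m
  proof
    assume m: "coord_row r m \<in> U"
    obtain e where e: "e < 2 ^ r" "\<forall>k<r. coord_row r k e \<longleftrightarrow> k = m"
      using point_on_single_row[OF m_lt] by blast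
    then have "{g \<in> U. g e} = {coord_row r m}"
      using U(1) ones m m_lt by (auto simp: RM1_rows_def)
    then show False using zero_at vsum_at_single by blast
  qed
  then show "U = {}" using U(1) ones by (auto simp: RM1_rows_def)
qed

lemma card_RM1_rows: "card (RM1_rows r) = Suc r"
proof -
  obtain z where z: "z < 2 ^ r" "\<forall>m<r. \<not> coord_row r m z" using point_off_rows by blast
  then have "ones_vec (2 ^ r) \<notin> coord_row r ` {..<r}" by (force simp: ones_vec_def fun_eq_iff)
  moreover have "inj_on (coord_row r) {..<r}"
  proof (rule inj_onI)
    fix m m' assume mm': "m \<in> {..<r}" "m' \<in> {..<r}" "coord_row r m = coord_row r m'"
    obtain e where e: "e < 2 ^ r" "\<forall>k<r. coord_row r k e \<longleftrightarrow> k = m"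
      using point_on_single_row mm'(1) by blast
    then have "coord_row r m e" using mm'(1) by simp
    then have "coord_row r m' e" using mm'(3) by simp
    then show "m = m'" using e(2) mm'(2) by simp
  qed
  ultimately show ?thesis by (simp add: RM1_rows_def card_image)
qed

lemma RM1_rows_words: "RM1_rows r \<subseteq> words (2 ^ r)"
  by (auto simp: RM1_rows_def words_def ones_vec_def coord_row_def)

lemma RM1_binary_code: "binary_code (2 ^ r) (Suc r) (RM1 r)"
  using gf2_span_linear_code[OF _ RM1_rows_words] card_gf2_span_independent[OF _ independent_RM1_rows]
    card_RM1_rows
  by (simp add: binary_code_def RM1_def RM1_rows_def)

lemma ones_in_RM1: "ones_vec (2 ^ r) \<in> RM1 r"
  using gf2_span_generators[of "RM1_rows r"] by (auto simp: RM1_def RM1_rows_def)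

lemma inner_even_ones: "inner_even n (ones_vec n) h \<longleftrightarrow> even (weight n h)"
  by (simp add: inner_even_def weight_def ones_vec_def)

text \<open>For r \<ge> 3 all rows have weight divisible by 4 and all pairs of rows meet in an even
  number of coordinates, so RM(1,r) is doubly even.\<close>
lemma RM1_doubly_even:
  assumes "3 \<le> r"
  shows "doubly_even (2 ^ r) (RM1 r)"
proof -
  have "4 dvd (2::nat) ^ k" if "2 \<le> k" for k
    using le_imp_power_dvd[OF that, of 2] by simp
  then have four_dvd: "4 dvd (2::nat) ^ r" "4 dvd (2::nat) ^ (r - 1)" using assms by simp_all
  have even_overlap: "even ((2::nat) ^ (r - 2))" using assms by simp
  have weights: "4 dvd weight (2 ^ r) g" if "g \<in> RM1_rows r" for g
    using that four_dvd coord_row_weight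
    by (auto simp: RM1_rows_def weight_def ones_vec_def)
  have "inner_even (2 ^ r) g h" if "g \<in> RM1_rows r" "h \<in> RM1_rows r" for g h
  proof -
    have sym: "inner_even (2 ^ r) g h \<longleftrightarrow> inner_even (2 ^ r) h g"
      by (simp add: inner_even_def conj_commute)
    have "even (weight (2 ^ r) g)" "even (weight (2 ^ r) h)"
      using weights that by (meson dvd_trans even_numeral)+
    moreover have "inner_even (2 ^ r) (coord_row r m) (coord_row r m')" if "m < r" "m' < r" for m m'
      using that coord_row_overlap[of m r m'] even_overlap coord_row_weight[of m r] four_dvd
      by (cases "m = m'") (auto simp: inner_even_def weight_def)
    ultimately show ?thesis
      using that sym by (auto simp: RM1_rows_def inner_even_ones)
  qed
  then show ?thesis
    unfolding RM1_def using doubly_even_gf2_span weights by (simp add: RM1_rows_def)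
qed

text \<open>The dual of RM(1,r) has minimum weight at least 4: a dual word has even weight
  (it is orthogonal to the all-ones word), and a weight-2 word would have to be orthogonal
  to a coordinate row separating its two support points.\<close>
lemma RM1_dual_min_weight: "min_weight_ge (2 ^ r) (dual_code (2 ^ r) (RM1 r)) 4"
  unfolding min_weight_ge_def
proof (intro ballI impI)
  fix v assume v: "v \<in> dual_code (2 ^ r) (RM1 r)" "v \<noteq> zero_vec"
  define A where "A = {i. i < 2 ^ r \<and> v i}"
  have orth: "inner_even (2 ^ r) v c" if "c \<in> RM1 r" for c
    using v(1) that by (simp add: dual_code_def)
  have "A \<noteq> {}"
  proof
    assume "A = {}"
    then have "v = zero_vec"
      using v(1) by (auto simp: A_def dual_code_def words_def zero_vec_def fun_eq_iff not_less)
    then show False using v(2) by contradiction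
  qed
  then have "card A \<noteq> 0" by (simp add: A_def)
  moreover have "even (card A)"
  proof -
    have "{i. i < 2 ^ r \<and> v i \<and> ones_vec (2 ^ r) i} = A" by (auto simp: A_def ones_vec_def)
    then show ?thesis using orth[OF ones_in_RM1] by (simp add: inner_even_def)
  qed
  moreover have "card A \<noteq> 2"
  proof
    assume "card A = 2"
    then obtain a b where ab: "A = {a, b}" "a \<noteq> b" by (auto simp: card_2_iff)
    then have "a < 2 ^ r" "b < 2 ^ r" by (auto simp: A_def)
    then obtain m where m: "m < r" "coord_row r m a \<noteq> coord_row r m b"
      using points_separated ab(2) by blast
    have "coord_row r m \<in> RM1 r"
      using m(1) gf2_span_generators[of "RM1_rows r"] by (auto simp: RM1_def RM1_rows_def)
    then have "even (card (A \<inter> {i. coord_row r m i}))"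
      using orth by (simp add: inner_even_def A_def Int_def conj_assoc)
    moreover have "A \<inter> {i. coord_row r m i} = (if coord_row r m a then {a} else {b})"
      using ab m(2) by auto
    ultimately show False by (simp split: if_splits)
  qed
  ultimately have "4 \<le> card A" by presburger
  then show "4 \<le> weight (2 ^ r) v" by (simp add: weight_def A_def)
qed

text \<open>If a code is spanned by the all-ones word and a family R, and its dual has no words of
  weight 1 or 2, then R alone separates the coordinates (the all-ones word separates none).\<close>
lemma spanning_rows_separate:
  assumes "gf2_span (insert (ones_vec n) R) = C"
    and "min_weight_ge n (dual_code n C) d" "2 < d" "i < n" "j < n" "i \<noteq> j"
  shows "\<exists>g\<in>R. g i \<noteq> g j"
proof (rule ccontr)
  assume "\<not> ?thesis"
  then have agree: "g i = g j" if "g \<in> insert (ones_vec n) R" for g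
    using that assms(4,5) by (auto simp: ones_vec_def)
  obtain c where c: "c \<in> C" "c i \<noteq> c j" using dual_separates_coordinates[OF assms(2-6)] by blast
  then obtain T where T: "T \<subseteq> insert (ones_vec n) R" "c = vsum T"
    using assms(1) by (auto simp: gf2_span_eq)
  then have "{g \<in> T. g i} = {g \<in> T. g j}" using agree by blast
  then have "c i = c j" by (simp add: T(2) vsum_def)
  then show False using c(2) by contradiction
qed

lemma permutation_matching_rows:
  assumes "bij_betw (column r b) {..<2 ^ r} (labels r)" "\<forall>m<r. b m \<in> words (2 ^ r)"
  shows "\<exists>\<tau>. \<tau> permutes {..<2 ^ r} \<and> (\<forall>m<r. coord_row r m \<circ> \<tau> = b m)"
proof -
  let ?rm = "column r (coord_row r)"
  define \<tau> where "\<tau> i = (if i < 2 ^ r then inv_into {..<2 ^ r} ?rm (column r b i) else i)" for i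
  have "bij_betw (inv_into {..<2 ^ r} ?rm \<circ> column r b) {..<2 ^ r} {..<2 ^ r}"
    using bij_betw_trans[OF assms(1) bij_betw_inv_into[OF coord_column_bij]] .
  then have "bij_betw \<tau> {..<2 ^ r} {..<2 ^ r}"
    by (rule bij_betw_cong[THEN iffD1, rotated]) (simp add: \<tau>_def)
  then have perm: "\<tau> permutes {..<2 ^ r}"
    by (rule bij_imp_permutes) (simp add: \<tau>_def)
  have "coord_row r m (\<tau> i) = b m i" if "m < r" for m i
  proof (cases "i < 2 ^ r")
    case True
    have "column r b i \<in> ?rm ` {..<2 ^ r}"
      using coord_column_bij[of r] column_in_labels by (simp add: bij_betw_def)
    then have "?rm (\<tau> i) = column r b i" using True by (simp add: \<tau>_def f_inv_into_f)
    then show ?thesis using that by (simp add: column_eq_iff)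
  next
    case False
    then show ?thesis using assms(2) that by (simp add: \<tau>_def coord_row_def words_def)
  qed
  then show ?thesis using perm by (auto simp: fun_eq_iff)
qed

lemma ones_vec_comp_permutes:
  assumes "\<tau> permutes {..<n}"
  shows "ones_vec n \<circ> \<tau> = ones_vec n"
  using permutes_in_image[OF assms] by (simp add: fun_eq_iff ones_vec_def)

text \<open>Pick a basis consisting
  of the all-ones word and r further words b_0, ..., b_(r-1); the dual condition makes the
  2^r columns of the b_m pairwise distinct, so they exhaust all labels in {0,1}^r, and
  reordering the coordinates turns the b_m into the coordinate rows.\<close>
lemma RM1_unique:
  assumes B: "binary_code (2 ^ r) (Suc r) B" "ones_vec (2 ^ r) \<in> B"
    and dual: "min_weight_ge (2 ^ r) (dual_code (2 ^ r) B) d" "2 < d"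
  shows "equiv_codes (2 ^ r) (RM1 r) B"
proof -
  have "ones_vec (2 ^ r) \<noteq> zero_vec"
    by (metis ones_vec_def zero_vec_def zero_less_numeral zero_less_power)
  then obtain S where S: "S \<subseteq> B" "ones_vec (2 ^ r) \<in> S" "card S = Suc r" "gf2_span S = B"
    using basis_containing[OF B] by blast
  have fin: "finite (S - {ones_vec (2 ^ r)})" "card (S - {ones_vec (2 ^ r)}) = r"
    using S(3) by (simp_all add: card_ge_0_finite S(2))
  then obtain b where b: "bij_betw b {..<r} (S - {ones_vec (2 ^ r)})"
    using ex_bij_betw_nat_finite[OF fin(1)] by (auto simp: atLeast0LessThan)
  then have S_eq: "S = insert (ones_vec (2 ^ r)) (b ` {..<r})"
    using S(2) by (auto simp: bij_betw_def)
  have words: "\<forall>m<r. b m \<in> words (2 ^ r)"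
    using B(1) S(1) S_eq by (auto simp: binary_code_def linear_code_def)
  have "inj_on (column r b) {..<2 ^ r}"
  proof (rule inj_onI, rule ccontr)
    fix i j assume ij: "i \<in> {..<2 ^ r}" "j \<in> {..<2 ^ r}" "column r b i = column r b j" "i \<noteq> j"
    have "\<exists>g \<in> b ` {..<r}. g i \<noteq> g j"
      using spanning_rows_separate[OF S(4)[unfolded S_eq] dual] ij(1,2,4) by simp
    then obtain m where "m < r" "b m i \<noteq> b m j" by auto
    then show False using ij(3) column_eq_iff by metis
  qed
  then obtain \<tau> where \<tau>: "\<tau> permutes {..<2 ^ r}" "\<forall>m<r. coord_row r m \<circ> \<tau> = b m"
    using permutation_matching_rows[OF bij_betw_column words] by blast
  have "(\<lambda>v. v \<circ> \<tau>) ` RM1_rows r = S"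
    using \<tau> ones_vec_comp_permutes[OF \<tau>(1)] by (auto simp: RM1_rows_def S_eq image_image)
  then have "(\<lambda>v. v \<circ> \<tau>) ` RM1 r = B"
    using gf2_span_comp[OF permutes_surj[OF \<tau>(1)]] S(4) by (simp add: RM1_def)
  then show ?thesis using \<tau>(1) by (auto simp: equiv_codes_def)
qed

lemma RM15_eq_RM1: "RM15 = RM1 5"
proof -
  have "{0..4::nat} = {..<5}" by auto
  then show ?thesis by (simp add: RM15_def RM1_def RM15_rows_def RM1_rows_def coord_row_def)
qed

text \<open>The theorem for r = 5.\<close>
theorem mainTheorem7:
  shows "binary_code 32 6 RM15 \<and> doubly_even 32 RM15 \<and> ones_vec 32 \<in> RM15
           \<and> min_weight_ge 32 (dual_code 32 RM15) 4
         \<and> (\<forall>B. binary_code 32 6 B \<and> doubly_even 32 B \<and> ones_vec 32 \<in> B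
               \<and> min_weight_ge 32 (dual_code 32 B) 4 \<longrightarrow> equiv_codes 32 RM15 B)"
  using RM1_binary_code[of 5] RM1_doubly_even[of 5] ones_in_RM1[of 5] RM1_dual_min_weight[of 5]
    RM1_unique[of 5 _ 4]
  by (simp add: RM15_eq_RM1)

end
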